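(* For every $0<s\le1$, $$\min\Big\{1-\sum_{i=1}^dp_i^2\;:\;p\in\Delta_d,\ \mathcal{E}_\star(p)\ge s\Big\}=s\,\frac{d-1}{d}.$$
   Context: $d\ge2$. $\Delta_d$ is the set of probability vectors $p=(p_1,\dots,p_d)$, $p_i\ge0$, $\sum_ip_i=1$. With the stellar spectrum $\lambda_j=e^{i\theta_j}$, $\theta_j=\frac{(d-2j+1)\pi}{d}$, define for a probability vector $p$: $\mathcal{E}_\star(p)=\min_{\sigma\in S_d}\big(1-\big|\sum_{i=1}^d\lambda_ip_{\sigma(i)}\big|^2\big)$. *)

theory Defs
  imports Complex_Main "HOL-Combinatorics.Permutations"
begin

definition prob_simplex :: "nat \<Rightarrow> (nat \<Rightarrow> real) set" where
  "prob_simplex d = {p. (\<forall>i\<in>{1..d}. 0 \<le> p i) \<and> (\<Sum>i=1..d. p i) = 1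
                        \<and> (\<forall>i. i \<notin> {1..d} \<longrightarrow> p i = 0)}"

definition stellar_lambda :: "nat \<Rightarrow> nat \<Rightarrow> complex" where
  "stellar_lambda d j = cis ((real d - 2 * real j + 1) * pi / real d)"

definition E_star :: "nat \<Rightarrow> (nat \<Rightarrow> real) \<Rightarrow> real" where
  "E_star d p = Min ((\<lambda>\<sigma>. 1 - (cmod (\<Sum>i=1..d. stellar_lambda d i * complex_of_real (p (\<sigma> i))))^2)
                     ` {\<sigma>. \<sigma> permutes {1..d}})"

end

theory Submission
  imports Defs
begin

(* Write S(p) = sum_i p_i^2 for the purity of a probability vector p.
   The stellar roots lambda_1..lambda_d are unit complex numbers summing to zero.
   For such weights, summing |sum_i lambda_i q(sigma i)|^2 over all n! permutations
   sigma of an n-element index set gives n! (n S - (sum q)^2) / (n - 1), because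
   permutation symmetry makes the second moments sum_sigma q(sigma i) q(sigma j)
   depend only on whether i = j.  Since a minimum is at most the mean, this yields
   E_star d p <= d (1 - S(p)) / (d - 1), i.e. 1 - S(p) >= s (d-1)/d whenever
   E_star d p >= s.  The bound is attained by the mixture t e_1 + (1-t) u of a point
   mass and the uniform vector u with t = sqrt (1 - s): for every sigma the sum
   collapses to t lambda_(inv sigma 1), so E_star equals 1 - t^2 = s exactly. *)

text \<open>Composing with a transposition shows that the permutation sum of g (sigma i)
  does not depend on the point i.\<close>
lemma sum_permutations_point_indep:
  assumes "i \<in> A" "i' \<in> A"
  shows "(\<Sum>\<sigma> | \<sigma> permutes A. g (\<sigma> i)) = (\<Sum>\<sigma> | \<sigma> permutes A. g (\<sigma> i'))"
  using sum_permutations_compose_right[OF permutes_swap_id[OF assms(2,1)], of "\<lambda>\<sigma>. g (\<sigma> i)"]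
  by simp

text \<open>Likewise the permutation sum of g (sigma i) (sigma j) is the same for all pairs
  of distinct points: some permutation of A maps (i, j) to (i', j').\<close>
lemma sum_permutations_pair_indep:
  assumes "i \<in> A" "j \<in> A" "i' \<in> A" "j' \<in> A" "i \<noteq> j" "i' \<noteq> j'"
  shows "(\<Sum>\<sigma> | \<sigma> permutes A. g (\<sigma> i) (\<sigma> j)) = (\<Sum>\<sigma> | \<sigma> permutes A. g (\<sigma> i') (\<sigma> j'))"
proof -
  define b where "b = Transposition.transpose i i' j'"
  have b: "b \<in> A" "b \<noteq> i"
    unfolding b_def using assms by (auto simp: Transposition.transpose_def)
  define \<tau> where "\<tau> = Transposition.transpose i i' \<circ> Transposition.transpose j b"
  have \<tau>: "\<tau> permutes A"
    unfolding \<tau>_def by (intro permutes_compose permutes_swap_id) (use assms b in auto)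
  have "\<tau> i = i'"
    unfolding \<tau>_def using b assms by simp
  moreover have "\<tau> j = j'"
    unfolding \<tau>_def by (simp add: b_def)
  ultimately show ?thesis
    using sum_permutations_compose_right[OF \<tau>, of "\<lambda>\<sigma>. g (\<sigma> i) (\<sigma> j)"] by simp
qed

text \<open>Diagonal second moment: each of the n points carries the same share of
  n! times the sum of squares.\<close>
lemma sum_permutations_square:
  fixes q :: "'a \<Rightarrow> real"
  assumes "finite A" "i \<in> A"
  shows "(\<Sum>\<sigma> | \<sigma> permutes A. q (\<sigma> i) * q (\<sigma> i))
       = fact (card A) * (\<Sum>k\<in>A. q k ^ 2) / card A"
proof -
  let ?P = "{\<sigma>. \<sigma> permutes A}"
  define D where "D = (\<Sum>\<sigma>\<in>?P. q (\<sigma> i) * q (\<sigma> i))"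
  have "(\<Sum>\<sigma>\<in>?P. \<Sum>k\<in>A. q (\<sigma> k) * q (\<sigma> k)) = (\<Sum>\<sigma>\<in>?P. \<Sum>k\<in>A. q k ^ 2)"
    using sum.permute[of _ A "\<lambda>x. q x * q x"] by (simp add: comp_def power2_eq_square)
  then have "fact (card A) * (\<Sum>k\<in>A. q k ^ 2) = (\<Sum>\<sigma>\<in>?P. \<Sum>k\<in>A. q (\<sigma> k) * q (\<sigma> k))"
    using assms(1) by (simp add: card_permutations)
  also have "\<dots> = (\<Sum>k\<in>A. \<Sum>\<sigma>\<in>?P. q (\<sigma> k) * q (\<sigma> k))"
    by (rule sum.swap)
  also have "\<dots> = (\<Sum>k\<in>A. D)"
    unfolding D_def
    by (intro sum.cong refl sum_permutations_point_indep[OF _ assms(2)])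
  also have "\<dots> = card A * D"
    by simp
  finally show ?thesis
    using assms unfolding D_def by (auto simp: field_simps card_gt_0_iff)
qed

text \<open>Off-diagonal second moment, obtained from the diagonal one by expanding the
  square of the total sum, which is invariant under permutations.\<close>
lemma sum_permutations_product:
  fixes q :: "'a \<Rightarrow> real"
  assumes "finite A" "i \<in> A" "j \<in> A" "i \<noteq> j"
  shows "(\<Sum>\<sigma> | \<sigma> permutes A. q (\<sigma> i) * q (\<sigma> j))
       = fact (card A) * ((\<Sum>k\<in>A. q k) ^ 2 - (\<Sum>k\<in>A. q k ^ 2)) / (card A * (card A - 1))"
proof -
  let ?P = "{\<sigma>. \<sigma> permutes A}"
  let ?n = "real (card A)"
  define D where "D = (\<Sum>\<sigma>\<in>?P. q (\<sigma> i) * q (\<sigma> i))"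
  define t where "t = (\<Sum>\<sigma>\<in>?P. q (\<sigma> i) * q (\<sigma> j))"
  have n2: "?n \<ge> 2"
    using assms card_mono[of A "{i, j}"] by simp
  have moment: "(\<Sum>\<sigma>\<in>?P. q (\<sigma> k) * q (\<sigma> k')) = t + (if k = k' then D - t else 0)"
    if "k \<in> A" "k' \<in> A" for k k'
    using that assms sum_permutations_point_indep[of k A i "\<lambda>x. q x * q x"]
      sum_permutations_pair_indep[of k A k' i j "\<lambda>x y. q x * q y"]
    unfolding D_def t_def by auto
  have "(\<Sum>\<sigma>\<in>?P. (\<Sum>k\<in>A. q (\<sigma> k)) * (\<Sum>k'\<in>A. q (\<sigma> k')))
      = (\<Sum>\<sigma>\<in>?P. (\<Sum>k\<in>A. q k) ^ 2)"
    using sum.permute[of _ A q] by (simp add: comp_def power2_eq_square)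
  then have "fact (card A) * (\<Sum>k\<in>A. q k) ^ 2
      = (\<Sum>\<sigma>\<in>?P. (\<Sum>k\<in>A. q (\<sigma> k)) * (\<Sum>k'\<in>A. q (\<sigma> k')))"
    using assms(1) by (simp add: card_permutations)
  also have "\<dots> = (\<Sum>k\<in>A. \<Sum>k'\<in>A. \<Sum>\<sigma>\<in>?P. q (\<sigma> k) * q (\<sigma> k'))"
    unfolding sum_product by (subst sum.swap) (simp add: sum.swap[of _ ?P])
  also have "\<dots> = (\<Sum>k\<in>A. \<Sum>k'\<in>A. t + (if k = k' then D - t else 0))"
    by (intro sum.cong refl) (simp add: moment)
  also have "\<dots> = ?n * ?n * t + ?n * (D - t)"
    using assms(1) by (simp add: sum.distrib algebra_simps)
  finally have "fact (card A) * (\<Sum>k\<in>A. q k) ^ 2 = ?n * ?n * t + ?n * (D - t)" .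
  moreover have "?n * D = fact (card A) * (\<Sum>k\<in>A. q k ^ 2)"
    using sum_permutations_square[OF assms(1,2), of q] n2 unfolding D_def by simp
  ultimately show ?thesis
    using n2 unfolding t_def by (simp add: of_nat_diff field_simps)
qed

lemma norm_sum_squared:
  fixes q :: "'a \<Rightarrow> real" and l :: "'a \<Rightarrow> complex"
  shows "(cmod (\<Sum>i\<in>A. l i * of_real (q i)))^2
       = (\<Sum>i\<in>A. \<Sum>j\<in>A. Re (l i * cnj (l j)) * q i * q j)"
proof -
  let ?z = "\<Sum>i\<in>A. l i * of_real (q i)"
  have "(cmod ?z)^2 = Re (?z * cnj ?z)"
    by (metis Re_complex_of_real complex_norm_square)
  also have "\<dots> = Re (\<Sum>i\<in>A. \<Sum>j\<in>A. (l i * of_real (q i)) * cnj (l j * of_real (q j)))"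
    by (simp add: cnj_sum sum_product)
  also have "\<dots> = (\<Sum>i\<in>A. \<Sum>j\<in>A. Re (l i * cnj (l j)) * q i * q j)"
    by (simp add: Re_sum mult_ac distrib_left sum.distrib)
  finally show ?thesis .
qed

lemma sum_permutations_norm_squared:
  fixes l :: "'a \<Rightarrow> complex" and q :: "'a \<Rightarrow> real"
  assumes A: "finite A" "card A \<ge> 2"
    and unit: "\<And>i. i \<in> A \<Longrightarrow> cmod (l i) = 1" and balanced: "(\<Sum>i\<in>A. l i) = 0"
  shows "(\<Sum>\<sigma> | \<sigma> permutes A. (cmod (\<Sum>i\<in>A. l i * of_real (q (\<sigma> i))))^2)
       = fact (card A) * (card A * (\<Sum>k\<in>A. q k ^ 2) - (\<Sum>k\<in>A. q k) ^ 2) / (card A - 1)"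
proof -
  let ?P = "{\<sigma>. \<sigma> permutes A}"
  let ?n = "real (card A)"
  define w where "w i j = Re (l i * cnj (l j))" for i j
  obtain a b where ab: "a \<in> A" "b \<in> A" "a \<noteq> b"
    using A by (metis One_nat_def card_le_Suc_iff numeral_2_eq_2 insertI1 insert_iff)
  define D where "D = (\<Sum>\<sigma>\<in>?P. q (\<sigma> a) * q (\<sigma> a))"
  define t where "t = (\<Sum>\<sigma>\<in>?P. q (\<sigma> a) * q (\<sigma> b))"
  have moment: "(\<Sum>\<sigma>\<in>?P. q (\<sigma> i) * q (\<sigma> j)) = t + (if i = j then D - t else 0)"
    if "i \<in> A" "j \<in> A" for i j
    using that ab sum_permutations_square[OF A(1), of _ q] sum_permutations_product[OF A(1), of _ _ q]
    unfolding D_def t_def by auto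
  have w_diag: "w i i = 1" if "i \<in> A" for i
    using unit[OF that] complex_norm_square[of "l i"] unfolding w_def by simp
  have w_total: "(\<Sum>i\<in>A. \<Sum>j\<in>A. w i j) = 0"
    using norm_sum_squared[of l "\<lambda>_. 1" A] balanced unfolding w_def by simp
  have "(\<Sum>\<sigma>\<in>?P. (cmod (\<Sum>i\<in>A. l i * of_real (q (\<sigma> i))))^2)
      = (\<Sum>\<sigma>\<in>?P. \<Sum>i\<in>A. \<Sum>j\<in>A. w i j * (q (\<sigma> i) * q (\<sigma> j)))"
    by (simp add: norm_sum_squared w_def mult.assoc)
  also have "\<dots> = (\<Sum>i\<in>A. \<Sum>j\<in>A. w i j * (\<Sum>\<sigma>\<in>?P. q (\<sigma> i) * q (\<sigma> j)))"
    unfolding sum_distrib_left by (subst sum.swap) (simp add: sum.swap[of _ ?P])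
  also have "\<dots> = (\<Sum>i\<in>A. \<Sum>j\<in>A. w i j * t + (if i = j then D - t else 0))"
    by (intro sum.cong refl) (simp add: moment w_diag algebra_simps)
  also have "\<dots> = ?n * (D - t)"
    using w_total A(1) by (simp add: sum.distrib sum_distrib_right[symmetric])
  also have "\<dots> = fact (card A) * (?n * (\<Sum>k\<in>A. q k ^ 2) - (\<Sum>k\<in>A. q k) ^ 2) / (?n - 1)"
  proof -
    have "?n \<ge> 2" using A by simp
    then show ?thesis
      using sum_permutations_square[OF A(1) ab(1), of q] sum_permutations_product[OF A(1) ab, of q]
      unfolding D_def t_def by (simp add: field_simps)
  qed
  finally show ?thesis
    using A by (simp add: of_nat_diff)
qed

lemma norm_stellar_lambda: "cmod (stellar_lambda d j) = 1"
  by (simp add: stellar_lambda_def)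

text \<open>The stellar roots are a rotated set of d-th roots of unity, so they sum to zero.\<close>
lemma sum_stellar_lambda:
  assumes "d \<ge> 2"
  shows "(\<Sum>j=1..d. stellar_lambda d j) = 0"
proof -
  define r where "r = cis (- 2 * pi / real d)"
  define c where "c = cis ((real d + 1) * pi / real d)"
  have dpos: "real d > 0" using assms by simp
  have geometric: "stellar_lambda d j = c * r ^ j" for j
    unfolding stellar_lambda_def c_def r_def DeMoivre cis_mult
    by (rule arg_cong[where f=cis]) (use dpos in \<open>simp add: field_simps\<close>)
  have "r ^ d = 1"
    using dpos unfolding r_def DeMoivre by (simp flip: cis_inverse)
  moreover have "r \<noteq> 1"
  proof -
    have "cos (2 * pi / real d) < cos 0"
      by (rule cos_monotone_0_pi) (use assms dpos in \<open>auto simp: field_simps\<close>)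
    then show ?thesis by (auto simp: r_def cis_def complex_eq_iff)
  qed
  ultimately have "(\<Sum>j=1..d. r ^ j) = 0"
    using assms by (simp add: sum_gp)
  then show ?thesis by (simp add: geometric sum_distrib_left[symmetric])
qed

text \<open>The minimum over permutations is at most their mean, which the averaging
  identity evaluates in terms of the purity alone.\<close>
lemma E_star_le_purity_deficit:
  assumes d: "d \<ge> 2" and p: "p \<in> prob_simplex d"
  shows "E_star d p \<le> real d * (1 - (\<Sum>i=1..d. (p i)^2)) / (real d - 1)"
proof -
  let ?P = "{\<sigma>. \<sigma> permutes {1..d}}"
  let ?f = "\<lambda>\<sigma>. 1 - (cmod (\<Sum>i=1..d. stellar_lambda d i * of_real (p (\<sigma> i))))^2"
  define S where "S = (\<Sum>i=1..d. (p i)^2)"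
  have N: "real (card ?P) = fact d"
    using card_permutations[of "{1..d}" d] by simp
  have "fact d * E_star d p \<le> (\<Sum>\<sigma>\<in>?P. ?f \<sigma>)"
    using sum_mono[of ?P "\<lambda>_. E_star d p" ?f] N
    unfolding E_star_def by (simp add: finite_permutations)
  also have "\<dots> = fact d - fact d * (real d * S - 1) / (real d - 1)"
    using sum_permutations_norm_squared[of "{1..d}" "stellar_lambda d" p]
      d p norm_stellar_lambda sum_stellar_lambda[OF d] N
    by (simp add: sum_subtractf S_def prob_simplex_def)
  also have "\<dots> = fact d * (real d * (1 - S) / (real d - 1))"
    using d by (simp add: field_simps)
  finally have "fact d * E_star d p \<le> fact d * (real d * (1 - S) / (real d - 1))" .
  then show ?thesis
    unfolding S_def by (rule mult_left_le_imp_le) simp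
qed

definition point_uniform_mixture :: "nat \<Rightarrow> real \<Rightarrow> nat \<Rightarrow> real" where
  "point_uniform_mixture d t i =
     (if i \<in> {1..d} then (if i = 1 then t else 0) + (1 - t) / real d else 0)"

lemma point_uniform_mixture_prob:
  assumes "d \<ge> 2" "0 \<le> t" "t \<le> 1"
  shows "point_uniform_mixture d t \<in> prob_simplex d"
proof -
  have "(\<Sum>i=1..d. point_uniform_mixture d t i) = (\<Sum>i=1..d. (if i = 1 then t else 0) + (1 - t) / real d)"
    by (intro sum.cong) (auto simp: point_uniform_mixture_def)
  also have "\<dots> = 1" using assms by (simp add: sum.distrib)
  finally show ?thesis
    using assms by (auto simp: prob_simplex_def point_uniform_mixture_def)
qed

lemma point_uniform_mixture_purity:
  assumes "d \<ge> 2"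
  shows "1 - (\<Sum>i=1..d. (point_uniform_mixture d t i)^2) = (1 - t^2) * (real d - 1) / real d"
proof -
  define c where "c = (1 - t) / real d"
  have "{1..d} = insert 1 {2..d}" using assms by auto
  then have "(\<Sum>i=1..d. (point_uniform_mixture d t i)^2) = (t + c)^2 + (\<Sum>i=2..d. c^2)"
    by (simp add: point_uniform_mixture_def c_def)
  also have "\<dots> = (t + c)^2 + (real d - 1) * c^2"
    using assms by (simp add: of_nat_diff)
  also have "\<dots> = t^2 + (1 - t^2) / real d"
    using assms unfolding c_def by (simp add: field_simps power2_eq_square)
  finally show ?thesis
    using assms by (simp add: field_simps)
qed

text \<open>Since the uniform part is annihilated by the balanced stellar roots, every
  permutation gives the same value 1 - t^2.\<close>
lemma E_star_point_uniform_mixture: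
  assumes d: "d \<ge> 2" and "0 \<le> t"
  shows "E_star d (point_uniform_mixture d t) = 1 - t^2"
proof -
  let ?p = "point_uniform_mixture d t"
  define c where "c = (1 - t) / real d"
  have modulus: "1 - (cmod (\<Sum>i=1..d. stellar_lambda d i * of_real (?p (\<sigma> i))))^2 = 1 - t^2"
    if \<sigma>: "\<sigma> permutes {1..d}" for \<sigma>
  proof -
    have pos: "inv \<sigma> 1 \<in> {1..d}"
      using d permutes_in_image[OF permutes_inv[OF \<sigma>]] by simp
    have "(\<Sum>i=1..d. stellar_lambda d i * of_real (?p (\<sigma> i)))
        = (\<Sum>i=1..d. (if i = inv \<sigma> 1 then of_real t * stellar_lambda d i else 0)
                     + of_real c * stellar_lambda d i)"
    proof (intro sum.cong refl)
      fix i assume i: "i \<in> {1..d}"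
      have "\<sigma> i \<in> {1..d}" using permutes_in_image[OF \<sigma>] i by simp
      moreover have "(\<sigma> i = 1) = (i = inv \<sigma> 1)"
        using permutes_inverses[OF \<sigma>] by metis
      ultimately show "stellar_lambda d i * of_real (?p (\<sigma> i))
          = (if i = inv \<sigma> 1 then of_real t * stellar_lambda d i else 0) + of_real c * stellar_lambda d i"
        by (auto simp: point_uniform_mixture_def c_def algebra_simps)
    qed
    also have "\<dots> = of_real t * stellar_lambda d (inv \<sigma> 1)"
      using pos sum_stellar_lambda[OF d] by (simp add: sum.distrib sum_distrib_left[symmetric])
    finally show ?thesis
      using assms by (simp add: norm_mult norm_stellar_lambda)
  qed
  have "(\<lambda>\<sigma>. 1 - (cmod (\<Sum>i=1..d. stellar_lambda d i * of_real (?p (\<sigma> i))))^2)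
          ` {\<sigma>. \<sigma> permutes {1..d}} = (\<lambda>_. 1 - t^2) ` {\<sigma>. \<sigma> permutes {1..d}}"
    using modulus by (intro image_cong) auto
  also have "\<dots> = {1 - t^2}"
    using permutes_id[of "{1..d}"] by blast
  finally show ?thesis
    unfolding E_star_def by simp
qed

theorem mainTheorem9:
  fixes d :: nat and s :: real
  assumes "d \<ge> 2" and "0 < s" and "s \<le> 1"
  shows "let V = (\<lambda>p. 1 - (\<Sum>i=1..d. (p i)^2)) ` {p \<in> prob_simplex d. E_star d p \<ge> s}
         in s * (real d - 1) / real d \<in> V \<and> (\<forall>v\<in>V. s * (real d - 1) / real d \<le> v)"
proof -
  define t where "t = sqrt (1 - s)"
  have t: "0 \<le> t" "t \<le> 1" "t^2 = 1 - s" using assms by (auto simp: t_def)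
  let ?p = "point_uniform_mixture d t"
  have attained: "?p \<in> prob_simplex d" "E_star d ?p = s"
    "1 - (\<Sum>i=1..d. (?p i)^2) = s * (real d - 1) / real d"
    using assms t point_uniform_mixture_prob E_star_point_uniform_mixture
      point_uniform_mixture_purity by auto
  have lower: "s * (real d - 1) / real d \<le> 1 - (\<Sum>i=1..d. (p i)^2)"
    if "p \<in> prob_simplex d" "s \<le> E_star d p" for p
  proof -
    have "s \<le> real d * (1 - (\<Sum>i=1..d. (p i)^2)) / (real d - 1)"
      using E_star_le_purity_deficit[OF assms(1) that(1)] that(2) by linarith
    then show ?thesis
      using assms(1) by (simp add: field_simps)
  qed
  show ?thesis
    unfolding Let_def using attained lower by (auto intro!: image_eqI[of _ _ ?p])
qed

end
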